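(* Let $m\ge2$, $n\ge1$, let $f_i:\mathbb{R}^n\to\mathbb{R}$ be smooth, $F(\boldsymbol\theta)=\sum_{i=1}^m f_i(\boldsymbol\theta_i)$ for $\boldsymbol\theta=[\boldsymbol\theta_1^\top,\dots,\boldsymbol\theta_m^\top]^\top\in\mathbb{R}^{mn}$, and $\mathbf{r}\in\mathbb{R}^n$. Let $\boldsymbol\theta^0\in\mathbb{R}^{mn}$ satisfy $(\mathbf{1}_m^\top\otimes\mathbf{I}_n)\boldsymbol\theta^0=\mathbf{r}$ and let $\alpha>0$. Define the auxiliary function $\Psi_{\boldsymbol\theta^0}(\mathbf{x})=F(\boldsymbol\theta^0+\sqrt{\hat{\mathbf{L}}}\mathbf{x})$ for $\mathbf{x}\in\mathbb{R}^{mn}$. Then the sequence $\{\boldsymbol\theta^k\}$ generated by $\boldsymbol\theta^{k+1}=\boldsymbol\theta^k-\alpha\hat{\mathbf{L}}\nabla F(\boldsymbol\theta^k)$ from $\boldsymbol\theta^0$ coincides with the sequence generated by $$\mathbf{x}^{k+1}=\mathbf{x}^k-\alpha\nabla\Psi_{\boldsymbol\theta^0}(\mathbf{x}^k),\qquad \boldsymbol\theta^{k+1}=\boldsymbol\theta^0+\sqrt{\hat{\mathbf{L}}}\mathbf{x}^{k+1},$$ started from $\mathbf{x}^0=\mathbf{0}$ and the same $\boldsymbol\theta^0$, with the same step-size $\alpha$.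
   Context: $\mathbf{L}$ is the Laplacian matrix of an undirected graph on $\{1,\dots,m\}$ (symmetric positive semidefinite); $\sqrt{\mathbf{L}}$ is its unique symmetric positive semidefinite square root; $\hat{\mathbf{L}}=\mathbf{L}\otimes\mathbf{I}_n$ and $\sqrt{\hat{\mathbf{L}}}=\sqrt{\mathbf{L}}\otimes\mathbf{I}_n$. $\nabla F(\boldsymbol\theta)$ is the stacked vector of $\nabla f_i(\boldsymbol\theta_i)$. *)

theory Defs
  imports "HOL-Analysis.Analysis"
begin

definition undirected_graph :: "('m \<Rightarrow> 'm \<Rightarrow> bool) \<Rightarrow> bool" where
  "undirected_graph E \<longleftrightarrow> (\<forall>i j. E i j \<longrightarrow> E j i) \<and> (\<forall>i. \<not> E i i)"

definition laplacian :: "('m::finite \<Rightarrow> 'm \<Rightarrow> bool) \<Rightarrow> real^'m^'m" where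
  "laplacian E = (\<chi> i j. if i = j then real (card {k. k \<noteq> i \<and> E i k})
                          else if E i j then -1 else 0)"

definition psd :: "real^'m^'m \<Rightarrow> bool" where
  "psd S \<longleftrightarrow> transpose S = S \<and> (\<forall>v. 0 \<le> v \<bullet> (S *v v))"

text \<open>Kronecker action (A \<otimes> I_n) on stacked vectors theta = [theta_1; ...; theta_m],
with blocks theta $ i in R^n.\<close>
definition kron_I :: "real^'m^'m \<Rightarrow> (real^'n)^'m \<Rightarrow> (real^'n)^'m" where
  "kron_I A th = (\<chi> i. \<Sum>j\<in>UNIV. A $ i $ j *\<^sub>R th $ j)"

definition grad :: "('a::real_inner \<Rightarrow> real) \<Rightarrow> 'a \<Rightarrow> 'a" where
  "grad f x = (THE g. (f has_derivative (\<lambda>h. g \<bullet> h)) (at x))"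

text \<open>Smooth (C-infinity) functions: all iterated Frechet derivatives exist everywhere;
D vs x is the iterated derivative in directions vs evaluated at x.\<close>
definition smooth :: "('a::real_normed_vector \<Rightarrow> real) \<Rightarrow> bool" where
  "smooth f \<longleftrightarrow> (\<exists>D :: 'a list \<Rightarrow> 'a \<Rightarrow> real. D [] = f \<and>
      (\<forall>vs x. (D vs has_derivative (\<lambda>h. D (h # vs) x)) (at x)))"

definition sepF :: "('m::finite \<Rightarrow> real^'n \<Rightarrow> real) \<Rightarrow> (real^'n)^'m \<Rightarrow> real" where
  "sepF f th = (\<Sum>i\<in>UNIV. f i (th $ i))"

definition gradF :: "('m::finite \<Rightarrow> real^'n \<Rightarrow> real) \<Rightarrow> (real^'n)^'m \<Rightarrow> (real^'n)^'m" where
  "gradF f th = (\<chi> i. grad (f i) (th $ i))"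

end

(* The substitution theta = theta^0 + sqrt(L) x turns the Laplacian-preconditioned gradient
   method into plain gradient descent on Psi: by the chain rule, and since sqrt(L) is
   symmetric, grad Psi(x) = sqrt(L) grad F(theta^0 + sqrt(L) x).  Hence one step of the
   x-iteration moves theta^0 + sqrt(L) x by -alpha sqrt(L) sqrt(L) grad F = -alpha L grad F,
   and induction on k shows theta^k = theta^0 + sqrt(L) x^k for all k. *)
theory Submission
  imports Defs
begin

lemma grad_eqI:
  fixes f :: "'a::real_inner \<Rightarrow> real"
  assumes "(f has_derivative (\<lambda>h. g \<bullet> h)) (at x)"
  shows "grad f x = g"
  unfolding grad_def
proof (rule the_equality)
  show "(f has_derivative (\<lambda>h. g \<bullet> h)) (at x)" by fact
  fix g' assume "(f has_derivative (\<lambda>h. g' \<bullet> h)) (at x)"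
  then have "(\<lambda>h. g' \<bullet> h) = (\<lambda>h. g \<bullet> h)"
    using assms has_derivative_unique by blast
  then have "(g' - g) \<bullet> (g' - g) = 0"
    by (metis inner_diff_left right_minus_eq)
  then show "g' = g" by simp
qed

lemma has_derivative_grad:
  fixes f :: "'a::euclidean_space \<Rightarrow> real"
  assumes "f differentiable (at x)"
  shows "(f has_derivative (\<lambda>h. grad f x \<bullet> h)) (at x)"
proof -
  obtain D where D: "(f has_derivative D) (at x)"
    using assms differentiable_def by blast
  have "D = (\<lambda>h. h \<bullet> adjoint D 1)"
    using adjoint_works[OF has_derivative_linear[OF D], of _ 1] by auto
  with D have "(f has_derivative (\<lambda>h. adjoint D 1 \<bullet> h)) (at x)"
    by (simp add: inner_commute)
  then show ?thesis
    by (simp add: grad_eqI)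
qed

lemma smooth_imp_differentiable:
  assumes "smooth f"
  shows "f differentiable (at x)"
  using assms unfolding smooth_def differentiable_def by metis

lemma grad_compose_affine:
  fixes g :: "'b::euclidean_space \<Rightarrow> real" and T :: "'a::euclidean_space \<Rightarrow> 'b"
  assumes T: "linear T" and T': "\<And>u v. T u \<bullet> v = u \<bullet> T' v"
    and g: "g differentiable (at (c + T y))"
  shows "grad (\<lambda>y. g (c + T y)) y = T' (grad g (c + T y))"
proof (rule grad_eqI)
  have "((\<lambda>y. c + T y) has_derivative T) (at y)"
    using T by (auto intro!: derivative_eq_intros simp: linear_imp_has_derivative)
  from has_derivative_compose[OF this has_derivative_grad[OF g]]
  show "((\<lambda>y. g (c + T y)) has_derivative (\<lambda>h. T' (grad g (c + T y)) \<bullet> h)) (at y)"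
    by (simp add: T' inner_commute)
qed

lemma linear_kron_I: "linear (kron_I A)"
  by (rule linearI)
    (simp_all add: kron_I_def vec_eq_iff scaleR_add_right sum.distrib scaleR_sum_right mult_ac)

lemma kron_I_matrix_mult: "kron_I (A ** B) v = kron_I A (kron_I B v)"
proof -
  have "(\<Sum>l\<in>UNIV. A $ i $ l *\<^sub>R (\<Sum>j\<in>UNIV. B $ l $ j *\<^sub>R v $ j))
      = (\<Sum>j\<in>UNIV. (\<Sum>l\<in>UNIV. A $ i $ l * B $ l $ j) *\<^sub>R v $ j)" for i
    by (simp add: scaleR_sum_left scaleR_sum_right) (rule sum.swap)
  then show ?thesis
    by (simp add: kron_I_def matrix_matrix_mult_def vec_eq_iff)
qed

lemma inner_kron_I_transpose:
  fixes g h :: "(real^'n::finite)^'m::finite"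
  shows "kron_I A g \<bullet> h = g \<bullet> kron_I (transpose A) h"
proof -
  have "kron_I A g \<bullet> h = (\<Sum>i\<in>UNIV. \<Sum>j\<in>UNIV. A $ i $ j * (g $ j \<bullet> h $ i))"
    by (simp only: inner_vec_def[of "kron_I A g" h]) (simp add: kron_I_def inner_sum_left)
  also have "\<dots> = (\<Sum>j\<in>UNIV. \<Sum>i\<in>UNIV. A $ i $ j * (g $ j \<bullet> h $ i))"
    by (rule sum.swap)
  also have "\<dots> = g \<bullet> kron_I (transpose A) h"
    by (simp only: inner_vec_def[of g]) (simp add: kron_I_def inner_sum_right transpose_def)
  finally show ?thesis .
qed

lemma has_derivative_sepF:
  fixes f :: "'m::finite \<Rightarrow> real^'n::finite \<Rightarrow> real"
  assumes "\<And>i. f i differentiable (at (z $ i))"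
  shows "(sepF f has_derivative (\<lambda>h. gradF f z \<bullet> h)) (at z)"
proof -
  have "((\<lambda>th. \<Sum>i\<in>UNIV. f i (th $ i))
      has_derivative (\<lambda>h. \<Sum>i\<in>UNIV. grad (f i) (z $ i) \<bullet> h $ i)) (at z)"
  proof (rule has_derivative_sum)
    fix i
    have "((\<lambda>th. th $ i) has_derivative (\<lambda>h. h $ i)) (at z)"
      by (intro bounded_linear_imp_has_derivative bounded_linear_vec_nth)
    from has_derivative_compose[OF this has_derivative_grad[OF assms]]
    show "((\<lambda>th. f i (th $ i)) has_derivative (\<lambda>h. grad (f i) (z $ i) \<bullet> h $ i)) (at z)" .
  qed
  then show ?thesis
    unfolding sepF_def gradF_def inner_vec_def by simp
qed

lemma grad_sepF_compose_kron_I: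
  fixes f :: "'m::finite \<Rightarrow> real^'n::finite \<Rightarrow> real"
  assumes "\<And>i z. f i differentiable (at z)" and "transpose S = S"
  shows "grad (\<lambda>y. sepF f (c + kron_I S y)) y = kron_I S (gradF f (c + kron_I S y))"
proof -
  have "sepF f differentiable (at (c + kron_I S y))"
    using has_derivative_sepF assms(1) differentiable_def by blast
  moreover have "grad (sepF f) z = gradF f z" for z
    using has_derivative_sepF assms(1) grad_eqI by blast
  ultimately show ?thesis
    using grad_compose_affine[OF linear_kron_I inner_kron_I_transpose, of "sepF f" c S y]
    by (simp add: assms(2))
qed

theorem proposition1:
  fixes E :: "'m::finite \<Rightarrow> 'm \<Rightarrow> bool"
    and S :: "real^'m^'m"
    and f :: "'m \<Rightarrow> real^'n::finite \<Rightarrow> real"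
    and r :: "real^'n"
    and th0 :: "(real^'n)^'m"
    and \<alpha> :: real
    and th th' x :: "nat \<Rightarrow> (real^'n)^'m"
  assumes m2: "CARD('m) \<ge> 2"
    and graph: "undirected_graph E"
    and sqrtL: "psd S" "S ** S = laplacian E"
    and smooth: "\<And>i. smooth (f i)"
    and cons: "(\<Sum>i\<in>UNIV. th0 $ i) = r"
    and alpha: "\<alpha> > 0"
    and th_0: "th 0 = th0"
    and th_step: "\<And>k. th (Suc k) = th k - \<alpha> *\<^sub>R kron_I (laplacian E) (gradF f (th k))"
    and x_0: "x 0 = 0"
    and x_step: "\<And>k. x (Suc k) = x k - \<alpha> *\<^sub>R grad (\<lambda>y. sepF f (th0 + kron_I S y)) (x k)"
    and th'_0: "th' 0 = th0"
    and th'_step: "\<And>k. th' (Suc k) = th0 + kron_I S (x (Suc k))"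
  shows "\<forall>k. th k = th' k"
proof -
  have "transpose S = S"
    using sqrtL(1) by (simp add: psd_def)
  then have grad_Psi:
    "grad (\<lambda>y. sepF f (th0 + kron_I S y)) y = kron_I S (gradF f (th0 + kron_I S y))" for y
    using grad_sepF_compose_kron_I smooth smooth_imp_differentiable by blast
  have th_eq: "th k = th0 + kron_I S (x k)" for k
  proof (induction k)
    case 0
    then show ?case
      by (simp add: th_0 x_0 linear_0[OF linear_kron_I])
  next
    case (Suc k)
    then show ?case
      by (simp add: th_step x_step grad_Psi linear_diff[OF linear_kron_I]
          linear_scale[OF linear_kron_I] kron_I_matrix_mult[symmetric] sqrtL(2))
  qed
  show ?thesis
  proof
    fix k
    show "th k = th' k"
      by (cases k) (simp_all add: th_eq th'_0 th'_step th_0 x_0 linear_0[OF linear_kron_I])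
  qed
qed

end
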